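(* Let $u^1:S\times B\to\mathbb{R}$ and let $y:S\to\Delta(B)$ satisfy $U^1(\mu_0,y)\ge U^1(\mu,y)$ for every $\mu\in\mathcal{M}$. Then every neighborhood of $y$ in $\mathbb{R}^{S\times B}$ contains a one-to-one map $\tilde y:S\to\Delta(B)$ such that $U^1(\mu_0,\tilde y)\ge U^1(\mu,\tilde y)$ for every $\mu\in\mathcal{M}$.
   Context: $S$ and $B$ are finite sets; messages are identified with states. $m\in\Delta(S)$ has full support. $\mathcal{M}$ is the set of probability distributions on $S\times S$ both of whose marginals equal $m$; $\mu_0(s,s)=m(s)$, $\mu_0(s,t)=0$ for $s\ne t$. With $u^1$ extended linearly to mixed actions, $U^1(\mu,y)=\sum_{s,a\in S}\mu(s,a)u^1(s,y(\cdot\mid a))$. *)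

theory Defs
  imports "HOL-Analysis.Analysis"
begin

definition is_dist :: "('a::finite \<Rightarrow> real) \<Rightarrow> bool" where
  "is_dist p \<longleftrightarrow> (\<forall>x. 0 \<le> p x) \<and> (\<Sum>x\<in>UNIV. p x) = 1"

definition couplings :: "('s::finite \<Rightarrow> real) \<Rightarrow> ('s \<times> 's \<Rightarrow> real) set" where
  "couplings m = {\<mu>. is_dist \<mu> \<and>
      (\<forall>s. (\<Sum>a\<in>UNIV. \<mu> (s, a)) = m s) \<and>
      (\<forall>a. (\<Sum>s\<in>UNIV. \<mu> (s, a)) = m a)}"

definition mu0 :: "('s \<Rightarrow> real) \<Rightarrow> ('s \<times> 's \<Rightarrow> real)" where
  "mu0 m = (\<lambda>(s, t). if s = t then m s else 0)"

definition u_mixed :: "('s \<Rightarrow> 'b::finite \<Rightarrow> real) \<Rightarrow> 's \<Rightarrow> ('b \<Rightarrow> real) \<Rightarrow> real" where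
  "u_mixed u s q = (\<Sum>b\<in>UNIV. q b * u s b)"

definition U1 :: "('s::finite \<Rightarrow> 'b::finite \<Rightarrow> real) \<Rightarrow> ('s \<times> 's \<Rightarrow> real) \<Rightarrow> ('s \<Rightarrow> 'b \<Rightarrow> real) \<Rightarrow> real" where
  "U1 u \<mu> y = (\<Sum>s\<in>UNIV. \<Sum>a\<in>UNIV. \<mu> (s, a) * u_mixed u s (y a))"

end

theory Submission
  imports Defs
begin

text \<open>
  A strategy is truthful as soon as its payoff matrix \<open>g s a = u\<^sup>1(s, y a)\<close> admits potentials
  \<open>\<phi>, \<psi>\<close> with \<open>g s a \<le> \<phi> s + \<psi> a\<close> and equality on the diagonal: integrating against a
  coupling with marginals \<open>m\<close> gives the same bound for every coupling, attained by \<open>\<mu>\<^sub>0\<close>.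
  Truthfulness is preserved by convex combinations, so it suffices to exhibit one injective
  truthful \<open>z\<close> and to move from \<open>y\<close> a little towards \<open>z\<close>: for small steps the mixture stays in
  the neighbourhood and separates all states.

  With \<open>v\<^sub>s\<close> the centred payoff vector of state \<open>s\<close>, take \<open>z\<^sub>a\<close> uniform plus a small multiple
  of \<open>v\<^sub>a + \<eta> \<kappa>(a) d\<close>, where \<open>\<kappa>\<close> is injective and \<open>d = e\<^sub>b\<^sub>1 - e\<^sub>b\<^sub>2\<close>. The Gram payoffs
  \<open>\<langle>v\<^sub>s, v\<^sub>a\<rangle>\<close> have the potentials \<open>|v\<^sub>s|\<^sup>2/2\<close>, with slack \<open>|v\<^sub>s - v\<^sub>a|\<^sup>2/2\<close>; the perturbation
  contributes \<open>\<eta> \<kappa>(a) \<langle>d, v\<^sub>s - v\<^sub>a\<rangle>\<close>, which vanishes where the slack does and is absorbed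
  elsewhere once \<open>\<eta>\<close> is small.
\<close>

definition truthful :: "('s::finite \<Rightarrow> real) \<Rightarrow> ('s \<Rightarrow> 'b::finite \<Rightarrow> real) \<Rightarrow> ('s \<Rightarrow> 'b \<Rightarrow> real) \<Rightarrow> bool" where
  "truthful m u y \<longleftrightarrow> (\<forall>\<mu>\<in>couplings m. U1 u \<mu> y \<le> U1 u (mu0 m) y)"

text \<open>A dual solution of the optimal transport problem over couplings, tight on the diagonal.\<close>

definition has_potentials :: "('s \<Rightarrow> 's \<Rightarrow> real) \<Rightarrow> bool" where
  "has_potentials g \<longleftrightarrow> (\<exists>\<phi> \<psi>. (\<forall>s a. g s a \<le> \<phi> s + \<psi> a) \<and> (\<forall>s. g s s = \<phi> s + \<psi> s))"

lemma U1_mu0: "U1 u (mu0 m) y = (\<Sum>s\<in>UNIV. m s * u_mixed u s (y s))"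
  unfolding U1_def mu0_def by (simp add: if_distrib[where f="\<lambda>x. x * _"] cong: if_cong)

lemma truthful_if_has_potentials:
  fixes u :: "'s::finite \<Rightarrow> 'b::finite \<Rightarrow> real"
  assumes "has_potentials (\<lambda>s a. u_mixed u s (y a))"
  shows "truthful m u y"
  unfolding truthful_def
proof
  fix \<mu> assume "\<mu> \<in> couplings m"
  then have nonneg: "\<And>x. 0 \<le> \<mu> x" and row: "\<And>s. (\<Sum>a\<in>UNIV. \<mu> (s, a)) = m s"
    and col: "\<And>a. (\<Sum>s\<in>UNIV. \<mu> (s, a)) = m a"
    by (auto simp: couplings_def is_dist_def)
  obtain \<phi> \<psi> where le: "\<And>s a. u_mixed u s (y a) \<le> \<phi> s + \<psi> a"
    and diag: "\<And>s. u_mixed u s (y s) = \<phi> s + \<psi> s"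
    using assms unfolding has_potentials_def by blast
  have "U1 u \<mu> y \<le> (\<Sum>s\<in>UNIV. \<Sum>a\<in>UNIV. \<mu> (s, a) * (\<phi> s + \<psi> a))"
    unfolding U1_def by (intro sum_mono mult_left_mono le nonneg)
  also have "\<dots> = (\<Sum>s\<in>UNIV. \<phi> s * (\<Sum>a\<in>UNIV. \<mu> (s, a))) + (\<Sum>a\<in>UNIV. \<psi> a * (\<Sum>s\<in>UNIV. \<mu> (s, a)))"
    by (simp add: distrib_left sum.distrib sum_distrib_left mult.commute)
      (rule sum.swap)
  also have "\<dots> = (\<Sum>s\<in>UNIV. m s * u_mixed u s (y s))"
    by (simp add: row col diag algebra_simps sum.distrib)
  also have "\<dots> = U1 u (mu0 m) y"
    by (simp add: U1_mu0)
  finally show "U1 u \<mu> y \<le> U1 u (mu0 m) y" .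
qed

lemma has_potentials_affine:
  assumes "has_potentials g" and "0 \<le> \<delta>"
  shows "has_potentials (\<lambda>s a. c s + \<delta> * g s a)"
proof -
  obtain \<phi> \<psi> where "\<And>s a. g s a \<le> \<phi> s + \<psi> a" and "\<And>s. g s s = \<phi> s + \<psi> s"
    using assms(1) unfolding has_potentials_def by blast
  with assms(2) show ?thesis
    unfolding has_potentials_def
    by (intro exI[of _ "\<lambda>s. c s + \<delta> * \<phi> s"] exI[of _ "\<lambda>a. \<delta> * \<psi> a"])
      (auto simp: distrib_left[symmetric] intro: mult_left_mono)
qed

lemma has_potentials_perturbed_gram:
  fixes v :: "'s \<Rightarrow> 'b::finite \<Rightarrow> real"
  assumes small: "\<And>s a. \<kappa> a * ((\<Sum>b\<in>UNIV. v s b * d b) - (\<Sum>b\<in>UNIV. v a b * d b))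
                          \<le> (\<Sum>b\<in>UNIV. (v s b - v a b)\<^sup>2) / 2"
  shows "has_potentials (\<lambda>s a. \<Sum>b\<in>UNIV. v s b * (v a b + \<kappa> a * d b))"
proof -
  define P where "P s a = (\<Sum>b\<in>UNIV. v s b * v a b)" for s a
  define E where "E s = (\<Sum>b\<in>UNIV. v s b * d b)" for s
  have payoff: "(\<Sum>b\<in>UNIV. v s b * (v a b + \<kappa> a * d b)) = P s a + \<kappa> a * E s" for s a
    unfolding P_def E_def by (simp add: distrib_left sum.distrib sum_distrib_left mult.left_commute)
  have dist_sq: "(\<Sum>b\<in>UNIV. (v s b - v a b)\<^sup>2) = P s s + P a a - 2 * P s a" for s a
  proof -
    have "(v s b - v a b)\<^sup>2 = v s b * v s b + v a b * v a b - 2 * (v s b * v a b)" for b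
      by (simp add: power2_eq_square algebra_simps)
    then show ?thesis
      unfolding P_def by (simp add: sum_subtractf sum.distrib sum_distrib_left mult.commute)
  qed
  have "P s a + \<kappa> a * E s \<le> P s s / 2 + (P a a / 2 + \<kappa> a * E a)" for s a
    using small[where s=s and a=a] dist_sq[of s a] unfolding E_def by (simp add: algebra_simps)
  then show ?thesis
    unfolding has_potentials_def payoff
    by (intro exI[of _ "\<lambda>s. P s s / 2"] exI[of _ "\<lambda>a. P a a / 2 + \<kappa> a * E a"]) auto
qed

lemma eventually_at_right_mult_le:
  fixes c D :: real
  assumes "0 \<le> D" and "D = 0 \<Longrightarrow> c = 0"
  shows "eventually (\<lambda>\<eta>. \<eta> * c \<le> D) (at_right 0)"
proof (cases "D = 0")
  case False
  have "((\<lambda>\<eta>. \<eta> * c) \<longlongrightarrow> 0 * c) (at_right 0)"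
    by (intro tendsto_intros)
  with False assms(1) show ?thesis
    by (auto dest: order_tendstoD(2)[where a = D] elim!: eventually_mono)
qed (use assms in auto)

lemma eventually_perturbation_below_slack:
  fixes v :: "'s::finite \<Rightarrow> 'b::finite \<Rightarrow> real"
  shows "eventually (\<lambda>\<eta>. \<forall>s a. \<eta> * (\<kappa> a * ((\<Sum>b\<in>UNIV. v s b * d b) - (\<Sum>b\<in>UNIV. v a b * d b)))
                               \<le> (\<Sum>b\<in>UNIV. (v s b - v a b)\<^sup>2) / 2) (at_right 0)"
proof (intro eventually_all_finite allI eventually_at_right_mult_le)
  fix s a
  show "0 \<le> (\<Sum>b\<in>UNIV. (v s b - v a b)\<^sup>2) / 2"
    by (simp add: sum_nonneg)
  assume "(\<Sum>b\<in>UNIV. (v s b - v a b)\<^sup>2) / 2 = 0"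
  then have "v s = v a"
    by (simp add: sum_nonneg_eq_0_iff fun_eq_iff)
  then show "\<kappa> a * ((\<Sum>b\<in>UNIV. v s b * d b) - (\<Sum>b\<in>UNIV. v a b * d b)) = 0"
    by simp
qed

lemma eventually_inj_plus_scaled:
  fixes f g :: "'s::finite \<Rightarrow> 'b \<Rightarrow> real"
  assumes sep: "\<And>s t. s \<noteq> t \<Longrightarrow> f s = f t \<Longrightarrow> g s \<noteq> g t"
  shows "eventually (\<lambda>e. inj (\<lambda>a b. f a b + e * g a b)) (at_right 0)"
proof -
  have "eventually (\<lambda>e. s \<noteq> t \<longrightarrow> (\<lambda>b. f s b + e * g s b) \<noteq> (\<lambda>b. f t b + e * g t b)) (at_right 0)"
    for s t
  proof (cases "f s = f t")
    case True
    have "eventually (\<lambda>e::real. 0 < e) (at_right 0)"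
      by (simp add: eventually_at_right_less)
    then show ?thesis
    proof (rule eventually_mono, intro impI)
      fix e :: real assume "0 < e" and "s \<noteq> t"
      then obtain b where "g s b \<noteq> g t b"
        using True sep by blast
      with \<open>0 < e\<close> True show "(\<lambda>b. f s b + e * g s b) \<noteq> (\<lambda>b. f t b + e * g t b)"
        by (auto dest: fun_cong[of _ _ b])
    qed
  next
    case False
    then obtain b where b: "f s b \<noteq> f t b" by auto
    have "((\<lambda>e. (f s b + e * g s b) - (f t b + e * g t b)) \<longlongrightarrow>
        (f s b + 0 * g s b) - (f t b + 0 * g t b)) (at_right 0)"
      by (intro tendsto_intros)
    then have "eventually (\<lambda>e. (f s b + e * g s b) - (f t b + e * g t b) \<noteq> 0) (at_right 0)"
      using b by (intro tendsto_imp_eventually_ne) auto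
    then show ?thesis
      by (rule eventually_mono) (auto dest: fun_cong[of _ _ b])
  qed
  then have "eventually (\<lambda>e. \<forall>s t. s \<noteq> t \<longrightarrow> (\<lambda>b. f s b + e * g s b) \<noteq> (\<lambda>b. f t b + e * g t b)) (at_right 0)"
    by (intro eventually_all_finite allI)
  then show ?thesis
    by (rule eventually_mono) (auto intro: injI)
qed

lemma U1_lin_comb:
  "U1 u \<mu> (\<lambda>a b. \<alpha> * y a b + \<beta> * z a b) = \<alpha> * U1 u \<mu> y + \<beta> * U1 u \<mu> z"
  unfolding U1_def u_mixed_def
  by (simp add: distrib_left distrib_right sum.distrib sum_distrib_left mult_ac)

lemma truthful_convex_comb:
  assumes "truthful m u y" and "truthful m u z" and "0 \<le> e" and "e \<le> 1"
  shows "truthful m u (\<lambda>a b. (1 - e) * y a b + e * z a b)"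
  using assms unfolding truthful_def U1_lin_comb
  by (auto intro!: add_mono mult_left_mono)

lemma is_dist_convex_comb:
  assumes "is_dist p" and "is_dist q" and "0 \<le> e" and "e \<le> 1"
  shows "is_dist (\<lambda>b. (1 - e) * p b + e * q b)"
  using assms unfolding is_dist_def by (auto simp: sum.distrib sum_distrib_left[symmetric])

lemma u_mixed_const_plus_zero_sum:
  fixes u :: "'s \<Rightarrow> 'b::finite \<Rightarrow> real"
  assumes "(\<Sum>b\<in>UNIV. w b) = 0"
  shows "u_mixed u s (\<lambda>b. c + \<delta> * w b) = c * (\<Sum>b\<in>UNIV. u s b) + \<delta> * (\<Sum>b\<in>UNIV. (u s b - k) * w b)"
proof -
  have "(\<Sum>b\<in>UNIV. (u s b - k) * w b) = (\<Sum>b\<in>UNIV. u s b * w b)"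
    using assms by (simp add: left_diff_distrib sum_subtractf sum_distrib_left[symmetric])
  then show ?thesis
    unfolding u_mixed_def by (simp add: algebra_simps sum.distrib sum_distrib_left)
qed

lemma exists_inj_zero_sum_perturbation:
  fixes v :: "'s::finite \<Rightarrow> 'b::finite \<Rightarrow> real" and b1 b2 :: 'b
  assumes "b1 \<noteq> b2" and v_sum: "\<And>s. (\<Sum>b\<in>UNIV. v s b) = 0"
  obtains w where "inj w" and "\<And>a. (\<Sum>b\<in>UNIV. w a b) = 0"
    and "has_potentials (\<lambda>s a. \<Sum>b\<in>UNIV. v s b * w a b)"
proof -
  obtain n :: "'s \<Rightarrow> nat" where "inj_on n UNIV"
    using finite_imp_inj_to_nat_seg[of "UNIV :: 's set"] by auto
  define \<kappa> where "\<kappa> a = real (n a)" for a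
  have \<kappa>_inj: "\<kappa> s = \<kappa> t \<Longrightarrow> s = t" for s t
    using \<open>inj_on n UNIV\<close> by (simp add: \<kappa>_def inj_eq)
  define d :: "'b \<Rightarrow> real" where "d b = (if b = b1 then 1 else 0) - (if b = b2 then 1 else 0)" for b
  note eventually_perturbation_below_slack[where \<kappa> = \<kappa> and v = v and d = d]
  moreover have "eventually (\<lambda>\<eta>. inj (\<lambda>a b. v a b + \<eta> * (\<kappa> a * d b))) (at_right 0)"
  proof (rule eventually_inj_plus_scaled)
    fix s t :: 's assume "s \<noteq> t"
    with \<kappa>_inj have "\<kappa> s * d b1 \<noteq> \<kappa> t * d b1"
      using assms(1) by (auto simp: d_def)
    then show "(\<lambda>b. \<kappa> s * d b) \<noteq> (\<lambda>b. \<kappa> t * d b)"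
      by metis
  qed
  ultimately obtain \<eta> where
    small: "\<And>s a. \<eta> * (\<kappa> a * ((\<Sum>b\<in>UNIV. v s b * d b) - (\<Sum>b\<in>UNIV. v a b * d b)))
                      \<le> (\<Sum>b\<in>UNIV. (v s b - v a b)\<^sup>2) / 2"
    and inj: "inj (\<lambda>a b. v a b + \<eta> * (\<kappa> a * d b))"
    using eventually_happens'[OF trivial_limit_at_right_real eventually_conj] by blast
  show ?thesis
  proof (rule that[of "\<lambda>a b. v a b + \<eta> * \<kappa> a * d b"])
    show "inj (\<lambda>a b. v a b + \<eta> * \<kappa> a * d b)"
      using inj by (simp add: mult.assoc)
    show "(\<Sum>b\<in>UNIV. v a b + \<eta> * \<kappa> a * d b) = 0" for a
      using assms(1) by (simp add: sum.distrib v_sum sum_distrib_left[symmetric] d_def sum_subtractf)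
    show "has_potentials (\<lambda>s a. \<Sum>b\<in>UNIV. v s b * (v a b + \<eta> * \<kappa> a * d b))"
      by (rule has_potentials_perturbed_gram) (use small in \<open>simp add: mult.assoc\<close>)
  qed
qed

lemma exists_inj_truthful:
  fixes u :: "'s::finite \<Rightarrow> 'b::finite \<Rightarrow> real"
  assumes "b1 \<noteq> (b2 :: 'b)"
  obtains z where "inj z" and "\<And>s. is_dist (z s)" and "truthful m u z"
proof -
  define v where "v s b = u s b - (\<Sum>b'\<in>UNIV. u s b') / CARD('b)" for s b
  have v_sum: "(\<Sum>b\<in>UNIV. v s b) = 0" for s
    unfolding v_def sum_subtractf sum_constant by simp
  obtain w where w_inj: "inj w" and w_sum: "\<And>a. (\<Sum>b\<in>UNIV. w a b) = 0"
    and w_pot: "has_potentials (\<lambda>s a. \<Sum>b\<in>UNIV. v s b * w a b)"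
    using exists_inj_zero_sum_perturbation[where v = v, OF assms v_sum] by blast
  define c :: real where "c = 1 / CARD('b)"
  have "c > 0"
    by (simp add: c_def)
  have "eventually (\<lambda>\<delta>. \<forall>a b. 0 < c + \<delta> * w a b) (at_right 0)"
  proof (intro eventually_all_finite allI)
    fix a b
    have "((\<lambda>\<delta>. c + \<delta> * w a b) \<longlongrightarrow> c) (at_right 0)"
      by (auto intro!: tendsto_eq_intros)
    from order_tendstoD(1)[OF this \<open>c > 0\<close>]
    show "eventually (\<lambda>\<delta>. 0 < c + \<delta> * w a b) (at_right 0)" .
  qed
  moreover have "eventually (\<lambda>\<delta>::real. 0 < \<delta>) (at_right 0)"
    by (simp add: eventually_at_right_less)
  ultimately obtain \<delta> where pos: "\<And>a b. 0 < c + \<delta> * w a b" and "0 < \<delta>"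
    using eventually_happens'[OF trivial_limit_at_right_real eventually_conj] by blast
  have payoff: "u_mixed u s (\<lambda>b. c + \<delta> * w a b)
      = c * (\<Sum>b\<in>UNIV. u s b) + \<delta> * (\<Sum>b\<in>UNIV. v s b * w a b)" for s a
    unfolding v_def by (rule u_mixed_const_plus_zero_sum[OF w_sum])
  show ?thesis
  proof (rule that[of "\<lambda>a b. c + \<delta> * w a b"])
    show "inj (\<lambda>a b. c + \<delta> * w a b)"
    proof (rule injI)
      fix s t assume "(\<lambda>b. c + \<delta> * w s b) = (\<lambda>b. c + \<delta> * w t b)"
      with \<open>0 < \<delta>\<close> have "w s = w t"
        by (simp add: fun_eq_iff)
      with w_inj show "s = t"
        by (rule injD)
    qed
    have "(\<Sum>b\<in>UNIV. c + \<delta> * w a b) = 1" for a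
      using w_sum[of a] by (simp add: sum.distrib sum_distrib_left[symmetric] c_def)
    with pos show "is_dist (\<lambda>b. c + \<delta> * w a b)" for a
      by (simp add: is_dist_def less_imp_le)
    have "has_potentials (\<lambda>s a. c * (\<Sum>b\<in>UNIV. u s b) + \<delta> * (\<Sum>b\<in>UNIV. v s b * w a b))"
      using w_pot \<open>0 < \<delta>\<close> by (rule has_potentials_affine[OF _ less_imp_le])
    then show "truthful m u (\<lambda>a b. c + \<delta> * w a b)"
      by (intro truthful_if_has_potentials) (simp only: payoff)
  qed
qed

lemma eventually_convex_comb_in_open:
  fixes y z :: "'s \<Rightarrow> 'b \<Rightarrow> real"
  assumes "open N" and "y \<in> N"
  shows "eventually (\<lambda>e. (\<lambda>a b. (1 - e) * y a b + e * z a b) \<in> N) (at_right 0)"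
proof -
  define F where "F e = (\<lambda>a b. (1 - e) * y a b + e * z a b)" for e :: real
  have "continuous_on UNIV F"
    unfolding F_def by (intro continuous_on_coordinatewise_then_product continuous_intros)
  then have "isCont F 0"
    by (simp add: continuous_on_eq_continuous_at)
  then have "(F \<longlongrightarrow> F 0) (at_right 0)"
    by (rule tendsto_within_subset[OF isContD]) simp
  then have "(F \<longlongrightarrow> y) (at_right 0)"
    by (simp add: F_def)
  from topological_tendstoD[OF this assms] show ?thesis
    by (simp add: F_def)
qed

lemma exists_inj_truthful_near:
  fixes y z :: "'s::finite \<Rightarrow> 'b::finite \<Rightarrow> real"
  assumes "open N" and "y \<in> N"
    and y_dist: "\<And>s. is_dist (y s)" and y_truthful: "truthful m u y"
    and z_inj: "inj z" and z_dist: "\<And>s. is_dist (z s)" and z_truthful: "truthful m u z"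
  shows "\<exists>y'\<in>N. inj y' \<and> (\<forall>s. is_dist (y' s)) \<and> truthful m u y'"
proof -
  define F where "F e = (\<lambda>a b. (1 - e) * y a b + e * z a b)" for e :: real
  have F_alt: "F e = (\<lambda>a b. y a b + e * (z a b - y a b))" for e
    by (simp add: F_def algebra_simps)
  have "eventually (\<lambda>e. F e \<in> N) (at_right 0)"
    unfolding F_def using assms(1,2) by (rule eventually_convex_comb_in_open)
  moreover have "eventually (\<lambda>e. inj (F e)) (at_right 0)"
    unfolding F_alt
  proof (rule eventually_inj_plus_scaled)
    fix s t assume "s \<noteq> t" and "y s = y t"
    with z_inj have "z s \<noteq> z t"
      by (auto dest: injD)
    with \<open>y s = y t\<close> show "(\<lambda>b. z s b - y s b) \<noteq> (\<lambda>b. z t b - y t b)"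
      by (auto simp: fun_eq_iff)
  qed
  moreover have "eventually (\<lambda>e::real. 0 < e \<and> e < 1) (at_right 0)"
    unfolding eventually_at_right_field by (intro exI[of _ 1]) auto
  ultimately obtain e where "F e \<in> N" "inj (F e)" "0 < e" "e < 1"
    using eventually_happens'[OF trivial_limit_at_right_real eventually_conj[OF _ eventually_conj]]
    by blast
  then show ?thesis
    using y_dist z_dist y_truthful z_truthful
    by (intro bexI[of _ "F e"]) (auto simp: F_def intro: is_dist_convex_comb truthful_convex_comb)
qed

theorem lemma12:
  fixes m :: "'s::finite \<Rightarrow> real"
    and u :: "'s \<Rightarrow> 'b::finite \<Rightarrow> real"
    and y :: "'s \<Rightarrow> 'b \<Rightarrow> real"
  assumes nontriv: "CARD('s) > 1 \<longrightarrow> CARD('b) > 1"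
    and m_dist: "is_dist m"
    and m_full: "\<forall>s. m s > 0"
    and y_dist: "\<forall>s. is_dist (y s)"
    and y_opt: "\<forall>\<mu>\<in>couplings m. U1 u (mu0 m) y \<ge> U1 u \<mu> y"
  shows "\<forall>N. open N \<and> y \<in> N \<longrightarrow>
           (\<exists>y'\<in>N. inj y' \<and> (\<forall>s. is_dist (y' s)) \<and>
              (\<forall>\<mu>\<in>couplings m. U1 u (mu0 m) y' \<ge> U1 u \<mu> y'))"
proof (intro allI impI)
  fix N :: "('s \<Rightarrow> 'b \<Rightarrow> real) set"
  assume N: "open N \<and> y \<in> N"
  have "truthful m u y"
    using y_opt by (simp add: truthful_def)
  have "\<exists>y'\<in>N. inj y' \<and> (\<forall>s. is_dist (y' s)) \<and> truthful m u y'"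
  proof (cases "CARD('s) > 1")
    case False
    then have "inj y"
      by (auto intro!: injI simp: card_le_Suc0_iff_eq[of UNIV, simplified] not_less)
    with N y_dist \<open>truthful m u y\<close> show ?thesis by blast
  next
    case True
    with nontriv have "\<not> CARD('b) \<le> Suc 0"
      by simp
    then obtain b1 b2 :: 'b where "b1 \<noteq> b2"
      by (subst (asm) card_le_Suc0_iff_eq) auto
    then obtain z where "inj z" "\<And>s. is_dist (z s)" "truthful m u z"
      using exists_inj_truthful[where m = m and u = u] by blast
    with N y_dist \<open>truthful m u y\<close> show ?thesis
      by (intro exists_inj_truthful_near[where z = z]) auto
  qed
  then show "\<exists>y'\<in>N. inj y' \<and> (\<forall>s. is_dist (y' s)) \<and>
              (\<forall>\<mu>\<in>couplings m. U1 u (mu0 m) y' \<ge> U1 u \<mu> y')"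
    by (simp add: truthful_def)
qed

end
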